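(* Let $X$ be a random vector in $\mathbb{R}^p$ with finite second moments and mean $\mu$, let $K\ge1$, $s>0$, and $\mathcal{W}=\{\mathbf{w}\in\mathbb{R}^p:\|\mathbf{w}\|_2^2\le1,\|\mathbf{w}\|_1\le s,w_j\ge0\ \forall j\}$. Then the map \[ (\mathbf{w},A)\mapsto \mathbb{E}\Bigl[\|X-\mu\|_{\mathbf{w}}^2-\min_{a\in A}\|X-a\|_{\mathbf{w}}^2\Bigr], \] defined for $\mathbf{w}\in\mathcal{W}$ and $A\subset\mathbb{R}^p$ with $\#A=K$, is continuous with respect to the metric $d((\mathbf{w}_1,A_1),(\mathbf{w}_2,A_2))=\max\{\|\mathbf{w}_1-\mathbf{w}_2\|,d_H(A_1,A_2)\}$, where $\|\cdot\|$ is the Euclidean norm and $d_H$ is the Hausdorff distance between subsets of $\mathbb{R}^p$ (with respect to the Euclidean metric).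
   Context: $\|\mathbf{x}\|_{\mathbf{w}}^2=\sum_{j=1}^p w_jx_j^2$. The Hausdorff distance is $d_H(A,B)=\max\{\sup_{x\in A}\inf_{y\in B}\|x-y\|,\ \sup_{y\in B}\inf_{x\in A}\|x-y\|\}$. *)

theory Defs
  imports "HOL-Analysis.Analysis" "HOL-Probability.Probability"
begin

definition wnorm2 :: "real^'p \<Rightarrow> real^'p \<Rightarrow> real" where
  "wnorm2 w x = (\<Sum>j\<in>UNIV. w$j * (x$j)^2)"

definition hausdorff_dist :: "'a::metric_space set \<Rightarrow> 'a set \<Rightarrow> real" where
  "hausdorff_dist A B = max (SUP x\<in>A. INF y\<in>B. dist x y) (SUP y\<in>B. INF x\<in>A. dist x y)"

definition weight_set :: "real \<Rightarrow> (real^'p) set" where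
  "weight_set s = {w. (norm w)^2 \<le> 1 \<and> (\<Sum>j\<in>UNIV. \<bar>w$j\<bar>) \<le> s \<and> (\<forall>j. w$j \<ge> 0)}"

definition objective :: "'a measure \<Rightarrow> ('a \<Rightarrow> real^'p) \<Rightarrow> real^'p \<Rightarrow> (real^'p) set \<Rightarrow> real" where
  "objective M X w A =
     (\<integral>\<omega>. wnorm2 w (X \<omega> - (\<integral>\<omega>'. X \<omega>' \<partial>M)) - Min ((\<lambda>a. wnorm2 w (X \<omega> - a)) ` A) \<partial>M)"

end

theory Submission
  imports Defs
begin

text \<open>For \<open>\<parallel>w\<parallel> \<le> 1\<close>, moving the weights by \<open>d\<close> and every centre by at most \<open>d\<close> changes each
  \<open>\<parallel>y - a\<parallel>\<^sub>w\<^sup>2\<close> by at most \<open>d (r + 1)\<^sup>2\<close>, where \<open>r\<close> bounds the distances from \<open>y\<close> to the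
  centres and to the mean; the same then holds for the minimum over the centres. With
  \<open>r = \<parallel>X\<parallel> + c\<close> the resulting envelope is integrable because \<open>X\<close> has finite second moment,
  so the objective is locally Lipschitz in \<open>(w, A)\<close>.\<close>

lemma abs_sum_mult3_le:
  fixes w u v :: "real^'n"
  shows "\<bar>\<Sum>j\<in>UNIV. w$j * u$j * v$j\<bar> \<le> norm w * norm u * norm v"
proof -
  have "\<bar>\<Sum>j\<in>UNIV. w$j * u$j * v$j\<bar> \<le> (\<Sum>j\<in>UNIV. \<bar>w$j\<bar> * (\<bar>u$j\<bar> * \<bar>v$j\<bar>))"
    using sum_abs[of "\<lambda>j. w$j * u$j * v$j" UNIV] by (simp add: abs_mult mult.assoc)
  also have "\<dots> \<le> (\<Sum>j\<in>UNIV. norm w * (\<bar>u$j\<bar> * \<bar>v$j\<bar>))"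
    by (intro sum_mono mult_right_mono component_le_norm_cart) simp
  also have "\<dots> \<le> norm w * (L2_set (\<lambda>j. u$j) UNIV * L2_set (\<lambda>j. v$j) UNIV)"
    unfolding sum_distrib_left[symmetric] by (intro mult_left_mono L2_set_mult_ineq) simp
  also have "\<dots> = norm w * norm u * norm v"
    by (simp add: norm_vec_def L2_set_def)
  finally show ?thesis .
qed

lemma abs_wnorm2_diff_weights_le: "\<bar>wnorm2 w' y - wnorm2 w y\<bar> \<le> norm (w' - w) * (norm y)^2"
proof -
  have "wnorm2 w' y - wnorm2 w y = (\<Sum>j\<in>UNIV. (w' - w)$j * y$j * y$j)"
    unfolding wnorm2_def by (simp add: sum_subtractf algebra_simps power2_eq_square)
  then show ?thesis
    using abs_sum_mult3_le[of "w' - w" y y] by (simp add: power2_eq_square mult.assoc)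
qed

lemma abs_wnorm2_le: "\<bar>wnorm2 w y\<bar> \<le> norm w * (norm y)^2"
  using abs_wnorm2_diff_weights_le[of w y 0] by (simp add: wnorm2_def)

lemma abs_wnorm2_diff_le: "\<bar>wnorm2 w y - wnorm2 w z\<bar> \<le> norm w * norm (y - z) * (norm y + norm z)"
proof -
  have "wnorm2 w y - wnorm2 w z = (\<Sum>j\<in>UNIV. w$j * (y - z)$j * (y + z)$j)"
    unfolding wnorm2_def by (simp add: sum_subtractf algebra_simps power2_eq_square)
  then have "\<bar>wnorm2 w y - wnorm2 w z\<bar> \<le> norm w * norm (y - z) * norm (y + z)"
    using abs_sum_mult3_le[of w "y - z" "y + z"] by simp
  also have "\<dots> \<le> norm w * norm (y - z) * (norm y + norm z)"
    by (intro mult_left_mono norm_triangle_ineq) auto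
  finally show ?thesis .
qed

lemma abs_wnorm2_perturb_le:
  assumes "norm w \<le> 1" "norm (w' - w) \<le> d" "dist b a \<le> d"
    and "norm (y - a) \<le> r" "norm (y - b) \<le> r"
  shows "\<bar>wnorm2 w' (y - b) - wnorm2 w (y - a)\<bar> \<le> d * (r + 1)^2"
proof -
  have "d \<ge> 0" using assms(2) norm_ge_zero order_trans by blast
  have "\<bar>wnorm2 w' (y - b) - wnorm2 w (y - b)\<bar> \<le> norm (w' - w) * (norm (y - b))^2"
    by (rule abs_wnorm2_diff_weights_le)
  also have "\<dots> \<le> d * r^2"
    using assms(2,5) \<open>d \<ge> 0\<close> by (intro mult_mono power_mono) auto
  finally have weights: "\<bar>wnorm2 w' (y - b) - wnorm2 w (y - b)\<bar> \<le> d * r^2" .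
  have "\<bar>wnorm2 w (y - b) - wnorm2 w (y - a)\<bar> \<le> norm w * norm (a - b) * (norm (y - b) + norm (y - a))"
    using abs_wnorm2_diff_le[of w "y - b" "y - a"] by simp
  also have "\<dots> \<le> 1 * d * (r + r)"
    using assms \<open>d \<ge> 0\<close> by (intro mult_mono add_mono) (auto simp: dist_norm norm_minus_commute)
  finally have centres: "\<bar>wnorm2 w (y - b) - wnorm2 w (y - a)\<bar> \<le> d * (2 * r)" by simp
  have "r^2 + 2 * r \<le> (r + 1)^2" by (simp add: power2_eq_square algebra_simps)
  then have "d * r^2 + d * (2 * r) \<le> d * (r + 1)^2"
    using mult_left_mono \<open>d \<ge> 0\<close> by (fastforce simp: distrib_left)
  then show ?thesis using weights centres by linarith
qed

lemma abs_Min_image_diff_le: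
  fixes g h :: "'b \<Rightarrow> 'c::linordered_idom"
  assumes "finite A" "A \<noteq> {}" "finite B" "B \<noteq> {}"
    and "\<forall>a\<in>A. \<exists>b\<in>B. h b \<le> g a + e" and "\<forall>b\<in>B. \<exists>a\<in>A. g a \<le> h b + e"
  shows "\<bar>Min (h ` B) - Min (g ` A)\<bar> \<le> e"
proof -
  have "Min (g ` A) \<in> g ` A" using assms(1,2) by (intro Min_in) auto
  then obtain a where a: "a \<in> A" "Min (g ` A) = g a" by blast
  have "Min (h ` B) \<in> h ` B" using assms(3,4) by (intro Min_in) auto
  then obtain b where b: "b \<in> B" "Min (h ` B) = h b" by blast
  obtain b' where "b' \<in> B" "h b' \<le> g a + e" using assms(5) a by blast
  moreover have "Min (h ` B) \<le> h b'" using \<open>b' \<in> B\<close> assms(3) by simp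
  moreover obtain a' where "a' \<in> A" "g a' \<le> h b + e" using assms(6) b by blast
  moreover have "Min (g ` A) \<le> g a'" using \<open>a' \<in> A\<close> assms(1) by simp
  ultimately show ?thesis using a(2) b(2) by (simp add: abs_le_iff algebra_simps)
qed

definition hausdorff_close :: "real \<Rightarrow> 'a::metric_space set \<Rightarrow> 'a set \<Rightarrow> bool" where
  "hausdorff_close d A B \<longleftrightarrow> (\<forall>x\<in>A. \<exists>y\<in>B. dist x y \<le> d) \<and> (\<forall>y\<in>B. \<exists>x\<in>A. dist x y \<le> d)"

lemma hausdorff_close_if_hausdorff_dist_less:
  fixes A B :: "'a::metric_space set"
  assumes "finite A" "A \<noteq> {}" "finite B" "B \<noteq> {}" "hausdorff_dist A B < d"
  shows "hausdorff_close d A B"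
proof -
  have "\<exists>y\<in>B. dist x y \<le> d" if "x \<in> A" for x
  proof -
    have "(INF y\<in>B. dist x y) \<le> (SUP x\<in>A. INF y\<in>B. dist x y)"
      using that assms(1) by (intro cSUP_upper) auto
    also have "\<dots> < d" using assms(5) by (simp add: hausdorff_dist_def)
    finally obtain y where "y \<in> B" "dist x y < d"
      using cInf_lessD[of "(\<lambda>y. dist x y) ` B" d] assms(4) by auto
    then show ?thesis by (auto intro: less_imp_le)
  qed
  moreover have "\<exists>x\<in>A. dist x y \<le> d" if "y \<in> B" for y
  proof -
    have "(INF x\<in>A. dist x y) \<le> (SUP y\<in>B. INF x\<in>A. dist x y)"
      using that assms(3) by (intro cSUP_upper) auto
    also have "\<dots> < d" using assms(5) by (simp add: hausdorff_dist_def)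
    finally obtain x where "x \<in> A" "dist x y < d"
      using cInf_lessD[of "(\<lambda>x. dist x y) ` A" d] assms(2) by auto
    then show ?thesis by (auto intro: less_imp_le)
  qed
  ultimately show ?thesis by (simp add: hausdorff_close_def)
qed

definition quantization_gain :: "real^'p \<Rightarrow> real^'p \<Rightarrow> (real^'p) set \<Rightarrow> real^'p \<Rightarrow> real" where
  "quantization_gain w \<mu> A y = wnorm2 w (y - \<mu>) - Min ((\<lambda>a. wnorm2 w (y - a)) ` A)"

lemma objective_eq_integral_quantization_gain:
  "objective M X w A = (\<integral>\<omega>. quantization_gain w (\<integral>\<omega>'. X \<omega>' \<partial>M) A (X \<omega>) \<partial>M)"
  by (simp add: objective_def quantization_gain_def)

lemma abs_quantization_gain_le:
  assumes "finite A" "A \<noteq> {}" "norm (y - \<mu>) \<le> r" "\<forall>a\<in>A. norm (y - a) \<le> r"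
  shows "\<bar>quantization_gain w \<mu> A y\<bar> \<le> 2 * norm w * r^2"
proof -
  have bound: "\<bar>wnorm2 w z\<bar> \<le> norm w * r^2" if "norm z \<le> r" for z
    using abs_wnorm2_le[of w z] that
    by (meson norm_ge_zero order_trans mult_left_mono power_mono)
  have "Min ((\<lambda>a. wnorm2 w (y - a)) ` A) \<in> (\<lambda>a. wnorm2 w (y - a)) ` A"
    using assms(1,2) by (intro Min_in) auto
  then have "\<bar>Min ((\<lambda>a. wnorm2 w (y - a)) ` A)\<bar> \<le> norm w * r^2"
    using bound assms(4) by auto
  then show ?thesis
    using bound[OF assms(3)] by (simp add: quantization_gain_def)
qed

lemma abs_quantization_gain_diff_le:
  assumes w: "norm w \<le> 1" "norm (w' - w) \<le> d"
    and A: "finite A" "A \<noteq> {}" "finite A'" "A' \<noteq> {}" and close: "hausdorff_close d A' A"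
    and r: "norm (y - \<mu>) \<le> r" "\<forall>a\<in>A \<union> A'. norm (y - a) \<le> r"
  shows "\<bar>quantization_gain w' \<mu> A' y - quantization_gain w \<mu> A y\<bar> \<le> 2 * d * (r + 1)^2"
proof -
  let ?e = "d * (r + 1)^2"
  have pair: "wnorm2 w' (y - b) \<le> wnorm2 w (y - a) + ?e \<and> wnorm2 w (y - a) \<le> wnorm2 w' (y - b) + ?e"
    if "a \<in> A" "b \<in> A'" "dist b a \<le> d" for a b
    using abs_wnorm2_perturb_le[OF w \<open>dist b a \<le> d\<close>, of y r] that r(2) by (simp add: abs_le_iff)
  have "0 \<le> d" using w(2) norm_ge_zero order_trans by blast
  then have centre: "\<bar>wnorm2 w' (y - \<mu>) - wnorm2 w (y - \<mu>)\<bar> \<le> ?e"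
    using abs_wnorm2_perturb_le[OF w, of \<mu> \<mu>] r(1) by simp
  have "\<bar>Min ((\<lambda>b. wnorm2 w' (y - b)) ` A') - Min ((\<lambda>a. wnorm2 w (y - a)) ` A)\<bar> \<le> ?e"
    by (rule abs_Min_image_diff_le[OF A(1-4)])
      (use close pair in \<open>fastforce simp: hausdorff_close_def\<close>)+
  then show ?thesis
    using centre by (simp add: quantization_gain_def abs_le_iff)
qed

lemma borel_measurable_quantization_gain:
  assumes "X \<in> borel_measurable M" "finite A"
  shows "(\<lambda>\<omega>. quantization_gain w \<mu> A (X \<omega>)) \<in> borel_measurable M"
proof -
  have "continuous_on UNIV (wnorm2 w)"
    unfolding wnorm2_def by (intro continuous_intros)
  then have [measurable]: "wnorm2 w \<in> borel_measurable borel"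
    by (rule borel_measurable_continuous_onI)
  show ?thesis
    unfolding quantization_gain_def using assms by measurable
qed

lemma (in finite_measure) integrable_norm_plus_const_power2:
  fixes X :: "'a \<Rightarrow> 'b::euclidean_space"
  assumes "X \<in> borel_measurable M" "integrable M (\<lambda>\<omega>. (norm (X \<omega>))^2)"
  shows "integrable M (\<lambda>\<omega>. (norm (X \<omega>) + c)^2)"
proof (rule Bochner_Integration.integrable_bound)
  show "integrable M (\<lambda>\<omega>. 2 * (norm (X \<omega>))^2 + 2 * c^2)"
    using assms(2) by simp
  show "(\<lambda>\<omega>. (norm (X \<omega>) + c)^2) \<in> borel_measurable M"
    using assms(1) by measurable
  have "(norm (X \<omega>) + c)^2 \<le> 2 * (norm (X \<omega>))^2 + 2 * c^2" for \<omega>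
    using sum_squares_bound[of "norm (X \<omega>)" c] by (simp add: power2_eq_square algebra_simps)
  then show "AE \<omega> in M. norm ((norm (X \<omega>) + c)^2) \<le> norm (2 * (norm (X \<omega>))^2 + 2 * c^2)"
    by simp
qed

lemma norm_diff_le_add_sum_norm:
  assumes "finite A" "a \<in> A"
  shows "norm (y - a) \<le> norm y + (\<Sum>b\<in>A. norm b)"
  using norm_triangle_ineq4[of y a] member_le_sum[of a A norm] assms by simp

lemma (in finite_measure) integrable_quantization_gain:
  assumes "X \<in> borel_measurable M" "integrable M (\<lambda>\<omega>. (norm (X \<omega>))^2)" "finite A" "A \<noteq> {}"
  shows "integrable M (\<lambda>\<omega>. quantization_gain w \<mu> A (X \<omega>))"
proof (rule Bochner_Integration.integrable_bound)
  define c where "c = (\<Sum>a\<in>insert \<mu> A. norm a)"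
  show "integrable M (\<lambda>\<omega>. 2 * norm w * (norm (X \<omega>) + c)^2)"
    using integrable_norm_plus_const_power2[OF assms(1,2)] by simp
  show "(\<lambda>\<omega>. quantization_gain w \<mu> A (X \<omega>)) \<in> borel_measurable M"
    using borel_measurable_quantization_gain[OF assms(1,3)] .
  have "\<bar>quantization_gain w \<mu> A (X \<omega>)\<bar> \<le> 2 * norm w * (norm (X \<omega>) + c)^2" for \<omega>
    unfolding c_def using assms(3,4)
    by (intro abs_quantization_gain_le ballI norm_diff_le_add_sum_norm) auto
  then show "AE \<omega> in M. norm (quantization_gain w \<mu> A (X \<omega>)) \<le> norm (2 * norm w * (norm (X \<omega>) + c)^2)"
    by simp
qed

lemma abs_integral_diff_le:
  fixes f g h :: "'a \<Rightarrow> real"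
  assumes "integrable M f" "integrable M g" "integrable M h"
    and "\<And>x. x \<in> space M \<Longrightarrow> \<bar>f x - g x\<bar> \<le> h x"
  shows "\<bar>integral\<^sup>L M f - integral\<^sup>L M g\<bar> \<le> integral\<^sup>L M h"
proof -
  have "\<bar>integral\<^sup>L M f - integral\<^sup>L M g\<bar> = \<bar>\<integral>x. f x - g x \<partial>M\<bar>"
    using assms(1,2) by simp
  also have "\<dots> \<le> (\<integral>x. \<bar>f x - g x\<bar> \<partial>M)"
    using integral_norm_bound[of M "\<lambda>x. f x - g x"] by simp
  also have "\<dots> \<le> integral\<^sup>L M h"
    using assms by (intro integral_mono) auto
  finally show ?thesis .
qed

lemma (in finite_measure) objective_locally_lipschitz:
  assumes X: "X \<in> borel_measurable M" "integrable M (\<lambda>\<omega>. (norm (X \<omega>))^2)"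
    and w: "norm w \<le> 1" and A: "finite A" "A \<noteq> {}"
  obtains C where "C \<ge> 0"
    and "\<And>d w' A'. d \<le> 1 \<Longrightarrow> norm (w' - w) \<le> d \<Longrightarrow> finite A' \<Longrightarrow> A' \<noteq> {} \<Longrightarrow>
           hausdorff_close d A' A \<Longrightarrow> \<bar>objective M X w' A' - objective M X w A\<bar> \<le> C * d"
proof
  define \<mu> where "\<mu> = (\<integral>\<omega>. X \<omega> \<partial>M)"
  \<comment> \<open>the \<open>+ 1\<close> accounts for the centres of \<open>A'\<close>, which lie within \<open>d \<le> 1\<close> of \<open>A\<close>\<close>
  define c where "c = (\<Sum>a\<in>insert \<mu> A. norm a) + 1"
  define D where "D = (\<lambda>\<omega>. 2 * (norm (X \<omega>) + c + 1)^2)"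
  have D: "integrable M D"
    unfolding D_def using integrable_norm_plus_const_power2[OF X, of "c + 1"] by (simp add: add.assoc)
  show "integral\<^sup>L M D \<ge> 0"
    unfolding D_def by (intro integral_nonneg_AE) auto
  fix d w' A'
  assume "d \<le> 1" and w': "norm (w' - w) \<le> d" and A': "finite A'" "A' \<noteq> {}"
    and close: "hausdorff_close d A' A"
  let ?g = "\<lambda>w A \<omega>. quantization_gain w \<mu> A (X \<omega>)"
  have near: "norm (y - a) \<le> norm y + c" if a: "a \<in> insert \<mu> (A \<union> A')" for y a
  proof -
    obtain a0 where "a0 \<in> insert \<mu> A" "dist a a0 \<le> 1"
      using a close \<open>d \<le> 1\<close> unfolding hausdorff_close_def
      by (metis Un_iff dist_self insertCI insertE order.trans zero_le_one)
    then have "norm a \<le> norm a0 + 1"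
      using norm_triangle_ineq2[of a a0] by (simp add: dist_norm)
    also have "\<dots> \<le> c"
      unfolding c_def using \<open>a0 \<in> insert \<mu> A\<close> A(1) by (simp add: member_le_sum)
    finally show ?thesis using norm_triangle_ineq4[of y a] by linarith
  qed
  have g: "integrable M (?g w A)" "integrable M (?g w' A')"
    using integrable_quantization_gain[OF X] A A' by auto
  have pointwise: "\<bar>?g w' A' \<omega> - ?g w A \<omega>\<bar> \<le> d * D \<omega>" for \<omega>
    using abs_quantization_gain_diff_le[OF w w' A A' close, of "X \<omega>" \<mu> "norm (X \<omega>) + c"] near
    by (simp add: D_def)
  have "\<bar>objective M X w' A' - objective M X w A\<bar> \<le> (\<integral>\<omega>. d * D \<omega> \<partial>M)"
    unfolding objective_eq_integral_quantization_gain \<mu>_def[symmetric]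
    using g D pointwise by (intro abs_integral_diff_le) auto
  then show "\<bar>objective M X w' A' - objective M X w A\<bar> \<le> integral\<^sup>L M D * d"
    by (simp add: mult.commute)
qed

lemma (in finite_measure) objective_continuous:
  assumes X: "X \<in> borel_measurable M" "integrable M (\<lambda>\<omega>. (norm (X \<omega>))^2)"
    and w: "norm w \<le> 1" and A: "finite A" "A \<noteq> {}" and "\<epsilon> > 0"
  obtains \<delta> where "\<delta> > 0"
    and "\<And>w' A'. norm (w' - w) < \<delta> \<Longrightarrow> finite A' \<Longrightarrow> A' \<noteq> {} \<Longrightarrow> hausdorff_dist A' A < \<delta> \<Longrightarrow>
           \<bar>objective M X w' A' - objective M X w A\<bar> < \<epsilon>"
proof -
  obtain C where "C \<ge> 0" and lipschitz: "\<And>d w' A'. d \<le> 1 \<Longrightarrow> norm (w' - w) \<le> d \<Longrightarrow>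
      finite A' \<Longrightarrow> A' \<noteq> {} \<Longrightarrow> hausdorff_close d A' A \<Longrightarrow>
      \<bar>objective M X w' A' - objective M X w A\<bar> \<le> C * d"
    using objective_locally_lipschitz[OF X w A] by blast
  define \<delta> where "\<delta> = min 1 (\<epsilon> / (C + 1))"
  have "\<delta> > 0" using \<open>\<epsilon> > 0\<close> \<open>C \<ge> 0\<close> by (simp add: \<delta>_def)
  have "C * \<delta> \<le> C * (\<epsilon> / (C + 1))"
    using \<open>C \<ge> 0\<close> unfolding \<delta>_def by (intro mult_left_mono) auto
  also have "\<dots> < \<epsilon>" using \<open>\<epsilon> > 0\<close> \<open>C \<ge> 0\<close> by (simp add: field_simps)
  finally have "C * \<delta> < \<epsilon>" .
  have "\<bar>objective M X w' A' - objective M X w A\<bar> < \<epsilon>"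
    if "norm (w' - w) < \<delta>" "finite A'" "A' \<noteq> {}" "hausdorff_dist A' A < \<delta>" for w' A'
  proof -
    have "hausdorff_close \<delta> A' A"
      using hausdorff_close_if_hausdorff_dist_less that A by blast
    then have "\<bar>objective M X w' A' - objective M X w A\<bar> \<le> C * \<delta>"
      using that by (intro lipschitz) (auto simp: \<delta>_def)
    with \<open>C * \<delta> < \<epsilon>\<close> show ?thesis by linarith
  qed
  with \<open>\<delta> > 0\<close> show ?thesis using that by blast
qed

lemma norm_le_1_if_weight_set: "w \<in> weight_set s \<Longrightarrow> norm w \<le> 1"
  unfolding weight_set_def by (simp add: power_le_one_iff)

theorem theorem2:
  fixes M :: "'a measure" and X :: "'a \<Rightarrow> real^'p" and K :: nat and s :: real
  assumes "prob_space M"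
    and "X \<in> borel_measurable M"
    and "integrable M (\<lambda>\<omega>. (norm (X \<omega>))^2)"
    and "K \<ge> 1" and "s > 0"
  shows "\<forall>w A. w \<in> weight_set s \<and> finite A \<and> card A = K \<longrightarrow>
           (\<forall>\<epsilon>>0. \<exists>\<delta>>0. \<forall>w' A'. w' \<in> weight_set s \<and> finite A' \<and> card A' = K \<and>
              max (norm (w' - w)) (hausdorff_dist A' A) < \<delta> \<longrightarrow>
              \<bar>objective M X w' A' - objective M X w A\<bar> < \<epsilon>)"
proof (intro allI impI)
  interpret prob_space M by fact
  fix w :: "real^'p" and A :: "(real^'p) set" and \<epsilon> :: real
  assume wA: "w \<in> weight_set s \<and> finite A \<and> card A = K" and "\<epsilon> > 0"
  then have "norm w \<le> 1" "finite A" "A \<noteq> {}"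
    using \<open>K \<ge> 1\<close> norm_le_1_if_weight_set by auto
  from objective_continuous[OF assms(2,3) this \<open>\<epsilon> > 0\<close>] obtain \<delta> where "\<delta> > 0"
    and "\<And>w' A'. norm (w' - w) < \<delta> \<Longrightarrow> finite A' \<Longrightarrow> A' \<noteq> {} \<Longrightarrow> hausdorff_dist A' A < \<delta> \<Longrightarrow>
           \<bar>objective M X w' A' - objective M X w A\<bar> < \<epsilon>"
    by blast
  with \<open>K \<ge> 1\<close> show "\<exists>\<delta>>0. \<forall>w' A'. w' \<in> weight_set s \<and> finite A' \<and> card A' = K \<and>
      max (norm (w' - w)) (hausdorff_dist A' A) < \<delta> \<longrightarrow>
      \<bar>objective M X w' A' - objective M X w A\<bar> < \<epsilon>"
    by (metis card.empty max_less_iff_conj not_one_le_zero)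
qed

end
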